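(* Let Assumption A hold and let $\pi=\pi^{\mathrm{priv}}\otimes\pi^{\mathrm{pub}}$ with $\pi^{\mathrm{priv}}$ the histogram partition with $t$ bins per coordinate and $\pi^{\mathrm{pub}}$ a max-edge partition of depth $p$ (possibly constructed from the data). There is $N$ depending only on $d$ such that for all $n\ge N$, if $(X_1,Y_1),\dots,(X_n,Y_n)$ are i.i.d. from $\mathrm P$, then with probability at least $1-1/n^2$, for every cell $A\in\pi$, $$\Big|\frac1n\sum_{i=1}^n\mathbf 1\{X_i\in A\}-\int_A d\mathrm P_X\Big|\le\sqrt{\frac{\overline c\, t^{-s}\,2^{1-p}(4d+5)\log n}{n}}+\frac{2(4d+5)\log n}{3n}+\frac4n.$$
   Context: $\mathrm P$ is a distribution on $[0,1]^d\times[-M,M]$. Assumption A: $\mathrm P_X$ has density in $[\underline c,\overline c]$, $\underline c>0$, and $f^*(x)=\mathbb E[Y|X=x]$ is $\alpha$-Hölder. Partition: fix $s\in\{0,\dots,d-1\}$; $\pi^{\mathrm{priv}}$ partitions coordinates $1,\dots,s$ into $t^s$ cubes of side $1/t$ (products of $[m/t,(m+1)/t)$); $\pi^{\mathrm{pub}}$ is a max-edge partition of depth $p$ of coordinates $s+1,\dots,d$: from $[0,1]^{d-s}$, in each of $p$ rounds every cell is halved at the midpoint of one of its longest edges (choice among longest edges by any rule, possibly data-dependent). Cells of $\pi$ are the axis-aligned rectangles $A\times B$, each of Lebesgue volume $t^{-s}2^{-p}$. *)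

theory Defs
  imports "HOL-Probability.Probability"
begin

text \<open>Points of [0,1]^d are represented as functions nat => real, coordinates 0..d-1
  (paper coordinates 1..d), living in the space of PiM {..<d} (\<lambda>_. lborel).
  Private coordinates: 0..s-1; public coordinates: s..d-1.\<close>

abbreviation Xspace :: "nat \<Rightarrow> (nat \<Rightarrow> real) measure" where
  "Xspace d \<equiv> PiM {..<d} (\<lambda>_. lborel)"

definition unit_cube :: "nat \<Rightarrow> (nat \<Rightarrow> real) set" where
  "unit_cube d = {x \<in> space (Xspace d). \<forall>i<d. 0 \<le> x i \<and> x i \<le> 1}"

text \<open>Public max-edge cells of depth p, described by lower/upper corner vectors (a,b) on
  coordinates s..d-1: starting from [0,1)^(d-s), in each round a cell is halved at the
  midpoint of one of its longest edges. This inductive set contains every cell of every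
  max-edge partition of depth p (for any, possibly data-dependent, splitting rule).\<close>

inductive maxedge_cell :: "nat \<Rightarrow> nat \<Rightarrow> nat \<Rightarrow> (nat \<Rightarrow> real) \<Rightarrow> (nat \<Rightarrow> real) \<Rightarrow> bool"
  for d s where
  root: "maxedge_cell d s 0 (\<lambda>_. 0) (\<lambda>_. 1)"
| left: "\<lbrakk> maxedge_cell d s p a b; j \<in> {s..<d};
          b j - a j = Max ((\<lambda>i. b i - a i) ` {s..<d}) \<rbrakk>
        \<Longrightarrow> maxedge_cell d s (Suc p) a (b(j := (a j + b j) / 2))"
| right: "\<lbrakk> maxedge_cell d s p a b; j \<in> {s..<d};
          b j - a j = Max ((\<lambda>i. b i - a i) ` {s..<d}) \<rbrakk>
        \<Longrightarrow> maxedge_cell d s (Suc p) (a(j := (a j + b j) / 2)) b"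

definition cells :: "nat \<Rightarrow> nat \<Rightarrow> nat \<Rightarrow> nat \<Rightarrow> (nat \<Rightarrow> real) set set" where
  "cells d s t p =
     {{x \<in> space (Xspace d).
         (\<forall>i<s. real (m i) / real t \<le> x i \<and> x i < (real (m i) + 1) / real t) \<and>
         (\<forall>i\<in>{s..<d}. a i \<le> x i \<and> x i < b i)}
      | m a b. (\<forall>i<s. m i < t) \<and> maxedge_cell d s p a b}"

definition assumption_A ::
  "nat \<Rightarrow> ((nat \<Rightarrow> real) \<times> real) measure \<Rightarrow> real \<Rightarrow> real \<Rightarrow> real \<Rightarrow> bool" where
  "assumption_A d P M c_lo c_hi \<longleftrightarrow>
     prob_space P \<and> sets P = sets (Xspace d \<Otimes>\<^sub>M lborel) \<and> M > 0 \<and>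
     (AE z in P. fst z \<in> unit_cube d \<and> \<bar>snd z\<bar> \<le> M) \<and>
     0 < c_lo \<and> c_lo \<le> c_hi \<and>
     (\<exists>g. g \<in> borel_measurable (Xspace d) \<and>
          distr P (Xspace d) fst = density (Xspace d) (\<lambda>x. ennreal (g x)) \<and>
          (\<forall>x. x \<notin> unit_cube d \<longrightarrow> g x = 0) \<and>
          (\<forall>x\<in>unit_cube d. c_lo \<le> g x \<and> g x \<le> c_hi)) \<and>
     (\<exists>f L \<alpha>. f \<in> borel_measurable (Xspace d) \<and>
          (\<forall>A\<in>sets (Xspace d).
              (\<integral>z. indicator A (fst z) * snd z \<partial>P) =
              (\<integral>x. indicator A x * f x \<partial>distr P (Xspace d) fst)) \<and>
          0 < \<alpha> \<and> \<alpha> \<le> 1 \<and> 0 \<le> L \<and>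
          (\<forall>x\<in>unit_cube d. \<forall>x'\<in>unit_cube d.
              \<bar>f x - f x'\<bar> \<le> L * (sqrt (\<Sum>i<d. (x i - x' i)\<^sup>2)) powr \<alpha>))"

end

theory Submission
  imports Defs
begin

text \<open>
  Fix a cell \<open>C\<close> of mass \<open>q \<le> v = c_hi t\<^sup>-\<^sup>s 2\<^sup>-\<^sup>p\<close> and put \<open>x = (4 d + 5) log n\<close>.
  Bernstein's inequality for the binomial count of sample points in \<open>C\<close> bounds the
  probability of a deviation beyond \<open>sqrt (2 v x / n) + 2 x / (3 n)\<close> by
  \<open>2 exp (- x) \<le> 2 / n\<^sup>5\<close>, which is at most \<open>4 q / n\<^sup>3\<close> when \<open>q \<ge> 1 / n\<^sup>2\<close>. When
  \<open>q < 1 / n\<^sup>2\<close>, a deviation beyond \<open>4 / n\<close> requires at least five sample points in \<open>C\<close>,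
  which by a Chernoff bound has probability at most \<open>e (n q)\<^sup>5 \<le> 3 q / n\<^sup>3\<close>.

  A max-edge cell of depth \<open>p\<close> has dyadic public edges of lengths \<open>2\<^sup>-\<^sup>k\<^sup>i\<close>, where
  splitting a longest edge keeps the levels \<open>k\<^sub>i\<close> balanced, so \<open>\<Sum> k\<^sub>i = p\<close> forces
  \<open>k\<^sub>i \<in> {p div (d - s), p div (d - s) + 1}\<close>. Hence all cells of all max-edge partitions
  of depth \<open>p\<close> (whatever the splitting rule, possibly data-dependent) fall into at most
  \<open>2\<^sup>d\<close> families of pairwise disjoint grid boxes, their total mass is at most \<open>2\<^sup>d\<close>, and
  the union bound gives failure probability \<open>4 \<cdot> 2\<^sup>d / n\<^sup>3 \<le> 1 / n\<^sup>2\<close> for \<open>n \<ge> 2\<^sup>d\<^sup>+\<^sup>2\<close>.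
\<close>

lemma two_mult_three_power_le_fact: "2 * 3 ^ k \<le> (fact (k + 2) :: real)"
proof (induction k)
  case 0
  then show ?case by simp
next
  case (Suc k)
  have "(2::real) * 3 ^ Suc k = 3 * (2 * 3 ^ k)" by simp
  also have "\<dots> \<le> (real k + 3) * fact (k + 2)"
    using Suc.IH by (intro mult_mono) auto
  also have "\<dots> = fact (Suc k + 2)"
    by (simp add: add.commute)
  finally show ?case .
qed

lemma exp_minus_one_minus_le:
  fixes l :: real
  assumes "0 \<le> l" "l < 3"
  shows "exp l - 1 - l \<le> l\<^sup>2 / (2 * (1 - l / 3))"
proof -
  have tail: "(\<lambda>k. l ^ (k + 2) / fact (k + 2)) sums (exp l - 1 - l)"
    using exp_first_two_terms[of l]
      summable_ignore_initial_segment[OF summable_exp_generic[of l], of 2]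
    by (simp add: summable_sums_iff divide_inverse mult.commute)
  have geometric: "(\<lambda>k. l\<^sup>2 / 2 * (l / 3) ^ k) sums (l\<^sup>2 / 2 * (1 / (1 - l / 3)))"
    using assms by (intro sums_mult geometric_sums) auto
  have "l ^ (k + 2) / fact (k + 2) \<le> l\<^sup>2 / 2 * (l / 3) ^ k" for k
  proof -
    have "l ^ (k + 2) / fact (k + 2) \<le> l ^ (k + 2) / (2 * 3 ^ k)"
      using assms by (intro divide_left_mono two_mult_three_power_le_fact) auto
    also have "\<dots> = l\<^sup>2 / 2 * (l / 3) ^ k"
      by (simp add: power_add power_divide power2_eq_square mult.commute)
    finally show ?thesis .
  qed
  then have "exp l - 1 - l \<le> l\<^sup>2 / 2 * (1 / (1 - l / 3))"
    using sums_le[OF _ tail geometric] by blast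
  then show ?thesis
    by (simp add: field_simps)
qed

lemma exp_uminus_minus_one_plus_le:
  fixes l :: real
  assumes "0 \<le> l"
  shows "exp (- l) - 1 + l \<le> exp l - 1 - l"
proof -
  have "exp (- l) + 2 * l - exp l \<le> exp (- 0) + 2 * 0 - exp 0"
  proof (rule DERIV_nonpos_imp_nonincreasing[where f = "\<lambda>y. exp (- y) + 2 * y - exp y"])
    fix y :: real
    have "2 \<le> exp (- y) + exp y"
      using exp_ge_add_one_self[of y] exp_ge_add_one_self[of "- y"] by linarith
    moreover have "((\<lambda>y. exp (- y) + 2 * y - exp y) has_real_derivative
        - exp (- y) + 2 - exp y) (at y)"
      by (auto intro!: derivative_eq_intros)
    ultimately show "\<exists>D. ((\<lambda>y. exp (- y) + 2 * y - exp y) has_real_derivative D) (at y) \<and> D \<le> 0"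
      by force
  qed (use assms in auto)
  then show ?thesis by simp
qed

lemma (in prob_space) nn_integral_exp_indicator:
  assumes "E \<in> events"
  shows "(\<integral>\<^sup>+ z. exp (l * indicator E z) \<partial>M) = ennreal (1 + prob E * (exp l - 1))"
proof -
  have "(\<integral>\<^sup>+ z. exp (l * indicator E z) \<partial>M)
      = (\<integral>\<^sup>+ z. ennreal (exp l) * indicator E z + indicator (space M - E) z \<partial>M)"
    by (intro nn_integral_cong) (auto split: split_indicator)
  also have "\<dots> = ennreal (exp l) * emeasure M E + emeasure M (space M - E)"
    using assms by (subst nn_integral_add) (auto simp: nn_integral_cmult_indicator)
  also have "\<dots> = ennreal (exp l * prob E + (1 - prob E))"
    using assms by (simp add: emeasure_eq_measure prob_compl ennreal_mult ennreal_plus[symmetric])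
  finally show ?thesis
    by (simp add: algebra_simps)
qed

lemma (in prob_space) nn_integral_exp_count:
  assumes "E \<in> events"
  shows "(\<integral>\<^sup>+ Z. exp (l * (\<Sum>i<n. indicator E (Z i))) \<partial>PiM {..<n} (\<lambda>_. M))
     = ennreal (1 + prob E * (exp l - 1)) ^ n"
proof -
  interpret product_sigma_finite "\<lambda>_. M" ..
  have "(\<integral>\<^sup>+ Z. exp (l * (\<Sum>i<n. indicator E (Z i))) \<partial>PiM {..<n} (\<lambda>_. M))
      = (\<integral>\<^sup>+ Z. (\<Prod>i<n. ennreal (exp (l * indicator E (Z i)))) \<partial>PiM {..<n} (\<lambda>_. M))"
    by (simp only: sum_distrib_left exp_sum[OF finite_lessThan] prod_ennreal[symmetric] exp_ge_zero)
  also have "\<dots> = (\<Prod>i<n. \<integral>\<^sup>+ z. exp (l * indicator E z) \<partial>M)"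
    using assms
    by (intro product_nn_integral_prod[where f = "\<lambda>_ z. ennreal (exp (l * indicator E z))"]) auto
  finally show ?thesis
    using assms by (simp add: nn_integral_exp_indicator)
qed

lemma (in prob_space) prob_count_chernoff:
  assumes [measurable]: "E \<in> events"
  shows "measure (PiM {..<n} (\<lambda>_. M))
      {Z \<in> space (PiM {..<n} (\<lambda>_. M)). c \<le> l * (\<Sum>i<n. indicator E (Z i))}
     \<le> exp (real n * prob E * (exp l - 1) - c)"
proof -
  let ?M = "PiM {..<n} (\<lambda>_. M)"
  interpret product: prob_space ?M
    by (intro prob_space_PiM) (simp add: prob_space_axioms)
  let ?S = "\<lambda>Z. (\<Sum>i<n. indicator E (Z i)) :: real"
  have "emeasure ?M {Z \<in> space ?M. c \<le> l * ?S Z}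
      = (\<integral>\<^sup>+ Z. indicator {Z \<in> space ?M. c \<le> l * ?S Z} Z \<partial>?M)"
    by (intro nn_integral_indicator[symmetric]) measurable
  also have "\<dots> \<le> (\<integral>\<^sup>+ Z. ennreal (exp (- c)) * exp (l * ?S Z) \<partial>?M)"
    by (intro nn_integral_mono)
      (auto simp: ennreal_mult[symmetric] exp_minus field_simps split: split_indicator)
  also have "\<dots> = ennreal (exp (- c)) * ennreal (1 + prob E * (exp l - 1)) ^ n"
    by (simp add: nn_integral_cmult nn_integral_exp_count)
  also have "\<dots> \<le> ennreal (exp (- c)) * ennreal (exp (prob E * (exp l - 1))) ^ n"
    by (intro mult_left_mono power_mono ennreal_leI) auto
  also have "\<dots> = ennreal (exp (- c) * exp (prob E * (exp l - 1)) ^ n)"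
    by (simp add: ennreal_mult ennreal_power)
  also have "\<dots> = ennreal (exp (real n * prob E * (exp l - 1) - c))"
    by (simp add: exp_of_nat_mult[symmetric] exp_diff exp_minus exp_add field_simps)
  finally show ?thesis
    by (simp add: product.emeasure_eq_measure)
qed

text \<open>The choice \<open>l = u / (V + u / 3)\<close> of the Chernoff parameter bounds the exponent by
  \<open>- u\<^sup>2 / (2 (V + u / 3))\<close>, which is at most \<open>- x\<close> for \<open>u = sqrt (2 V x) + 2 x / 3\<close>.\<close>

lemma bernstein_exponent_le:
  fixes V x w u l :: real
  assumes V: "0 < V" and x: "0 \<le> x" and w: "0 \<le> w" "w \<le> V"
    and u: "u = sqrt (2 * V * x) + 2 * x / 3" and l: "l = u / (V + u / 3)"
  shows "w * (exp l - 1) - l * (w + u) \<le> - x"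
    and "w * (exp (- l) - 1) + l * (w - u) \<le> - x"
proof -
  have u0: "0 \<le> u" using u V x by simp
  have D: "0 < V + u / 3" using V u0 by linarith
  have l0: "0 \<le> l" using l u0 D by simp
  have l3: "l < 3"
    using l D V by (simp add: divide_less_eq)
  have lu: "l * (V + u / 3) = u" using l D by simp
  have "V * (l\<^sup>2 / (2 * (1 - l / 3))) = l * u / 2"
  proof -
    have denom: "1 - l / 3 = V / (V + u / 3)" using l D by (simp add: field_simps)
    have "V * (l\<^sup>2 / (2 * (1 - l / 3))) = l * (l * (V + u / 3)) / 2"
      unfolding denom using V D by (simp add: field_simps power2_eq_square)
    then show ?thesis using lu by simp
  qed
  moreover have "2 * x * (V + u / 3) \<le> u\<^sup>2"
  proof -
    have "u\<^sup>2 - 2 * x * (V + u / 3) = sqrt (2 * V * x) * (2 * x / 3)"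
      unfolding u using V x by (simp add: power2_eq_square algebra_simps)
    moreover have "0 \<le> sqrt (2 * V * x) * (2 * x / 3)"
      using V x by simp
    ultimately show ?thesis by linarith
  qed
  then have "x \<le> l * u / 2"
    using lu D by (simp add: l field_simps power2_eq_square)
  ultimately have main: "V * (l\<^sup>2 / (2 * (1 - l / 3))) - l * u \<le> - x"
    by linarith
  have "w * (exp l - 1 - l) \<le> V * (exp l - 1 - l)"
    using w exp_ge_add_one_self[of l] by (intro mult_right_mono) linarith+
  also have "\<dots> \<le> V * (l\<^sup>2 / (2 * (1 - l / 3)))"
    using V exp_minus_one_minus_le[OF l0 l3] by (intro mult_left_mono) auto
  finally have W: "w * (exp l - 1 - l) \<le> V * (l\<^sup>2 / (2 * (1 - l / 3)))" .
  then show "w * (exp l - 1) - l * (w + u) \<le> - x"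
    using main by (simp add: algebra_simps)
  have "w * (exp (- l) - 1 + l) \<le> w * (exp l - 1 - l)"
    using w l0 by (intro mult_left_mono exp_uminus_minus_one_plus_le)
  then show "w * (exp (- l) - 1) + l * (w - u) \<le> - x"
    using W main by (simp add: algebra_simps)
qed

lemma (in prob_space) prob_count_deviation_bernstein:
  assumes [measurable]: "E \<in> events"
    and V: "0 < V" "real n * prob E \<le> V" and x: "0 \<le> x"
  shows "measure (PiM {..<n} (\<lambda>_. M))
      {Z \<in> space (PiM {..<n} (\<lambda>_. M)).
        sqrt (2 * V * x) + 2 * x / 3 \<le> \<bar>(\<Sum>i<n. indicator E (Z i)) - real n * prob E\<bar>}
     \<le> 2 * exp (- x)"
proof -
  let ?M = "PiM {..<n} (\<lambda>_. M)"
  interpret product: prob_space ?M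
    by (intro prob_space_PiM) (simp add: prob_space_axioms)
  let ?S = "\<lambda>Z. (\<Sum>i<n. indicator E (Z i)) :: real"
  define w where "w = real n * prob E"
  define u where "u = sqrt (2 * V * x) + 2 * x / 3"
  define l where "l = u / (V + u / 3)"
  have "0 \<le> u" using V x by (simp add: u_def)
  then have l0: "0 \<le> l" using V by (simp add: l_def)
  define upper where "upper = {Z \<in> space ?M. l * (w + u) \<le> l * ?S Z}"
  define lower where "lower = {Z \<in> space ?M. - l * (w - u) \<le> - l * ?S Z}"
  have [measurable]: "upper \<in> sets ?M" "lower \<in> sets ?M"
    unfolding upper_def lower_def by measurable
  have "{Z \<in> space ?M. u \<le> \<bar>?S Z - w\<bar>} \<subseteq> upper \<union> lower"
  proof safe
    fix Z assume Z: "Z \<in> space ?M" "u \<le> \<bar>?S Z - w\<bar>" "Z \<notin> lower"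
    have "\<not> ?S Z \<le> w - u"
      using Z l0 mult_left_mono[of "?S Z" "w - u" l] by (auto simp: lower_def)
    then have "w + u \<le> ?S Z"
      using Z(2) by linarith
    with \<open>Z \<in> space ?M\<close> show "Z \<in> upper"
      using l0 by (auto simp: upper_def intro: mult_left_mono)
  qed
  then have "measure ?M {Z \<in> space ?M. u \<le> \<bar>?S Z - w\<bar>} \<le> measure ?M (upper \<union> lower)"
    by (intro product.finite_measure_mono) auto
  also have "\<dots> \<le> measure ?M upper + measure ?M lower"
    by (rule measure_Un_le) auto
  also have "\<dots> \<le> exp (w * (exp l - 1) - l * (w + u)) + exp (w * (exp (- l) - 1) + l * (w - u))"
    unfolding upper_def lower_def w_def
    using prob_count_chernoff[of E n "l * (real n * prob E + u)" l]
      prob_count_chernoff[of E n "- l * (real n * prob E - u)" "- l"]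
    by (intro add_mono) (auto simp: mult.assoc)
  also have "\<dots> \<le> exp (- x) + exp (- x)"
    using bernstein_exponent_le[OF V(1) x _ _ u_def l_def, of w] V
    by (intro add_mono) (auto simp: w_def)
  finally show ?thesis
    by (simp add: u_def w_def)
qed

lemma le_zero_if_le_exp_neg_mult:
  fixes a k :: real
  assumes "0 < k" "\<And>l. 0 \<le> l \<Longrightarrow> a \<le> exp (- (l * k))"
  shows "a \<le> 0"
proof (rule ccontr)
  assume "\<not> a \<le> 0"
  then have "0 < a" by simp
  have "a \<le> exp (- (max 0 (- ln a) + 1))"
    using assms(1) assms(2)[of "(max 0 (- ln a) + 1) / k"] by simp
  also have "\<dots> \<le> exp (ln a - 1)"
    by simp
  also have "\<dots> < exp (ln a)"
    by simp
  finally show False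
    using \<open>0 < a\<close> by simp
qed

lemma (in prob_space) prob_count_ge_le:
  assumes [measurable]: "E \<in> events"
    and small: "real n * prob E \<le> 1" and k: "0 < k"
  shows "measure (PiM {..<n} (\<lambda>_. M))
      {Z \<in> space (PiM {..<n} (\<lambda>_. M)). real k \<le> (\<Sum>i<n. indicator E (Z i))}
     \<le> exp 1 * (real n * prob E) ^ k"
proof -
  let ?M = "PiM {..<n} (\<lambda>_. M)"
  interpret product: prob_space ?M
    by (intro prob_space_PiM) (simp add: prob_space_axioms)
  let ?A = "{Z \<in> space ?M. real k \<le> (\<Sum>i<n. indicator E (Z i))}"
  define w where "w = real n * prob E"
  have chernoff: "measure ?M ?A \<le> exp (w * (exp l - 1) - l * k)" if "0 \<le> l" for l
  proof -
    have "measure ?M ?A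
        \<le> measure ?M {Z \<in> space ?M. l * k \<le> l * (\<Sum>i<n. indicator E (Z i))}"
      using that by (intro product.finite_measure_mono) (auto intro: mult_left_mono)
    also have "\<dots> \<le> exp (w * (exp l - 1) - l * k)"
      unfolding w_def by (rule prob_count_chernoff) fact
    finally show ?thesis .
  qed
  show ?thesis
  proof (cases "w = 0")
    case True
    have "measure ?M ?A \<le> 0"
      using k chernoff by (intro le_zero_if_le_exp_neg_mult[of "real k"]) (simp_all add: True)
    then show ?thesis
      using True k unfolding w_def[symmetric] by (simp add: power_0_left)
  next
    case False
    moreover have "0 \<le> w"
      by (simp add: w_def)
    ultimately have w: "0 < w" "w \<le> 1"
      using small unfolding w_def[symmetric] by auto
    define l where "l = - ln w"
    have "measure ?M ?A \<le> exp (w * (exp l - 1) - l * k)"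
      using w by (intro chernoff) (simp add: l_def)
    also have "\<dots> = exp (1 - w) * exp (real k * ln w)"
      using w by (simp add: l_def exp_minus exp_add[symmetric] field_simps)
    also have "\<dots> = exp (1 - w) * w ^ k"
      using w by (simp add: exp_of_nat_mult)
    also have "\<dots> \<le> exp 1 * w ^ k"
      using w by (intro mult_right_mono) auto
    finally show ?thesis by (simp add: w_def)
  qed
qed

lemma (in prob_space) prob_empirical_deviation_bernstein:
  assumes [measurable]: "E \<in> events"
    and n: "0 < n" and c: "prob E \<le> c" "0 < c" and x: "0 \<le> x"
  shows "measure (PiM {..<n} (\<lambda>_. M))
      {Z \<in> space (PiM {..<n} (\<lambda>_. M)).
        sqrt (2 * c * x / n) + 2 * x / (3 * real n) \<le> \<bar>(\<Sum>i<n. indicator E (Z i)) / n - prob E\<bar>}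
     \<le> 2 * exp (- x)"
    (is "measure ?M {Z \<in> space ?M. ?B \<le> ?D Z} \<le> _")
proof -
  let ?S = "\<lambda>Z. (\<Sum>i<n. indicator E (Z i)) :: real"
  have n': "0 < real n" using n by simp
  have "sqrt (2 * (n * c) * x) = sqrt ((real n)\<^sup>2 * (2 * c * x / n))"
    using n' by (simp add: power2_eq_square field_simps)
  also have "\<dots> = n * sqrt (2 * c * x / n)"
    by (simp only: real_sqrt_mult real_sqrt_abs abs_of_nat)
  finally have scaled: "n * ?B = sqrt (2 * (n * c) * x) + 2 * x / 3"
    using n' by (simp add: field_simps)
  have "n * ?D Z = \<bar>?S Z - n * prob E\<bar>" for Z
    using n' by (simp add: abs_mult[symmetric] field_simps)
  moreover have "?B \<le> ?D Z \<longleftrightarrow> n * ?B \<le> n * ?D Z" for Z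
    using n' by (rule mult_le_cancel_left_pos[symmetric])
  ultimately have "?B \<le> ?D Z \<longleftrightarrow> sqrt (2 * (n * c) * x) + 2 * x / 3 \<le> \<bar>?S Z - n * prob E\<bar>" for Z
    by (simp only: scaled)
  then have "measure ?M {Z \<in> space ?M. ?B \<le> ?D Z}
      = measure ?M {Z \<in> space ?M. sqrt (2 * (n * c) * x) + 2 * x / 3 \<le> \<bar>?S Z - n * prob E\<bar>}"
    by simp
  also have "\<dots> \<le> 2 * exp (- x)"
    using n' c x by (intro prob_count_deviation_bernstein) auto
  finally show ?thesis .
qed

lemma (in prob_space) prob_empirical_deviation_rare:
  assumes [measurable]: "E \<in> events"
    and n: "0 < n" and small: "prob E < 1 / real n ^ 2"
  shows "measure (PiM {..<n} (\<lambda>_. M))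
      {Z \<in> space (PiM {..<n} (\<lambda>_. M)). 4 / n < \<bar>(\<Sum>i<n. indicator E (Z i)) / n - prob E\<bar>}
     \<le> 3 * prob E / real n ^ 3"
proof -
  let ?M = "PiM {..<n} (\<lambda>_. M)"
  interpret product: prob_space ?M
    by (intro prob_space_PiM) (simp add: prob_space_axioms)
  let ?S = "\<lambda>Z. (\<Sum>i<n. indicator E (Z i)) :: real"
  define q where "q = prob E"
  have n': "0 < real n" "1 \<le> real n" using n by auto
  have "0 \<le> q" by (simp add: q_def)
  have "1 / real n ^ 2 \<le> 4 / n"
    using n' by (simp add: field_simps power2_eq_square)
  then have "q \<le> 4 / n"
    using small by (simp add: q_def)
  have "{Z \<in> space ?M. 4 / n < \<bar>?S Z / n - q\<bar>} \<subseteq> {Z \<in> space ?M. real 5 \<le> ?S Z}"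
  proof safe
    fix Z assume Z: "4 / n < \<bar>?S Z / n - q\<bar>"
    have "?S Z / n \<le> 4 / n" if "?S Z \<le> 4"
      using that by (simp add: divide_right_mono)
    moreover have "0 \<le> ?S Z / n"
      by (simp add: sum_nonneg)
    ultimately have "\<not> ?S Z \<le> 4"
      using Z \<open>0 \<le> q\<close> \<open>q \<le> 4 / n\<close> by linarith
    moreover have "?S Z = real (card ({..<n} \<inter> {i. Z i \<in> E}))"
      by (simp add: indicator_def)
    ultimately show "real 5 \<le> ?S Z"
      by simp
  qed
  then have "measure ?M {Z \<in> space ?M. 4 / n < \<bar>?S Z / n - q\<bar>}
      \<le> measure ?M {Z \<in> space ?M. real 5 \<le> ?S Z}"
    by (intro product.finite_measure_mono) measurable
  also have "\<dots> \<le> exp 1 * (n * q) ^ 5"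
  proof (unfold q_def, intro prob_count_ge_le)
    have "1 / real n ^ 2 \<le> 1 / n"
      using n' by (simp add: field_simps power2_eq_square)
    then have "prob E < 1 / n"
      using small by linarith
    then show "n * prob E \<le> 1"
      using n' by (simp add: field_simps)
  qed auto
  also have "\<dots> = exp 1 * real n ^ 5 * q ^ 4 * q"
    by (simp add: power_mult_distrib power_Suc2[symmetric] del: power_Suc)
  also have "\<dots> \<le> 3 * real n ^ 5 * (1 / real n ^ 2) ^ 4 * q"
    using small exp_le \<open>0 \<le> q\<close> unfolding q_def
    by (intro mult_right_mono mult_mono power_mono) (auto intro: mult_right_mono)
  also have "\<dots> = 3 * q / real n ^ 3"
    using n' by (simp add: field_simps power_mult[symmetric] power_add[symmetric])
  finally show ?thesis
    by (simp add: q_def)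
qed

lemma (in prob_space) prob_empirical_deviation_le:
  assumes E[measurable]: "E \<in> events"
    and n: "0 < n" and c: "prob E \<le> c" "0 < c"
    and x: "0 \<le> x" "exp (- x) \<le> 1 / real n ^ 5"
  shows "measure (PiM {..<n} (\<lambda>_. M))
      {Z \<in> space (PiM {..<n} (\<lambda>_. M)).
        sqrt (2 * c * x / n) + 2 * x / (3 * real n) + 4 / n
          < \<bar>(\<Sum>i<n. indicator E (Z i)) / n - prob E\<bar>}
     \<le> 4 * prob E / real n ^ 3"
    (is "measure ?M {Z \<in> space ?M. ?B + 4 / n < ?D Z} \<le> _")
proof -
  interpret product: prob_space ?M
    by (intro prob_space_PiM) (simp add: prob_space_axioms)
  have "0 \<le> ?B" "0 \<le> 4 / real n"
    using c x by simp_all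
  show ?thesis
  proof (cases "1 / real n ^ 2 \<le> prob E")
    case True
    have "{Z \<in> space ?M. ?B + 4 / n < ?D Z} \<subseteq> {Z \<in> space ?M. ?B \<le> ?D Z}"
    proof safe
      fix Z assume "?B + 4 / n < ?D Z"
      then show "?B \<le> ?D Z"
        using \<open>0 \<le> 4 / real n\<close> by linarith
    qed
    then have "measure ?M {Z \<in> space ?M. ?B + 4 / n < ?D Z} \<le> measure ?M {Z \<in> space ?M. ?B \<le> ?D Z}"
      by (intro product.finite_measure_mono) auto
    also have "\<dots> \<le> 2 * exp (- x)"
      by (rule prob_empirical_deviation_bernstein[OF E n c x(1)])
    also have "\<dots> \<le> 2 * (1 / real n ^ 5)"
      using x by simp
    also have "\<dots> \<le> 4 * (1 / real n ^ 2) / real n ^ 3"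
      by (simp add: power_add[symmetric] divide_right_mono)
    also have "\<dots> \<le> 4 * prob E / real n ^ 3"
      using True by (intro divide_right_mono mult_left_mono) auto
    finally show ?thesis .
  next
    case False
    have "{Z \<in> space ?M. ?B + 4 / n < ?D Z} \<subseteq> {Z \<in> space ?M. 4 / n < ?D Z}"
    proof safe
      fix Z assume "?B + 4 / n < ?D Z"
      then show "4 / n < ?D Z"
        using \<open>0 \<le> ?B\<close> by linarith
    qed
    then have "measure ?M {Z \<in> space ?M. ?B + 4 / n < ?D Z} \<le> measure ?M {Z \<in> space ?M. 4 / n < ?D Z}"
      by (intro product.finite_measure_mono) auto
    also have "\<dots> \<le> 3 * prob E / real n ^ 3"
      using n False by (intro prob_empirical_deviation_rare) auto
    also have "\<dots> \<le> 4 * prob E / real n ^ 3"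
      by (simp add: divide_right_mono)
    finally show ?thesis .
  qed
qed

lemma (in prob_space) prob_uniform_empirical_deviation:
  assumes f[measurable]: "f \<in> M \<rightarrow>\<^sub>M X"
    and family: "finite \<C>" "\<C> \<subseteq> sets X"
    and c: "\<And>C. C \<in> \<C> \<Longrightarrow> measure (distr M X f) C \<le> c" "0 < c"
    and K: "(\<Sum>C\<in>\<C>. measure (distr M X f) C) \<le> K" "4 * K \<le> real n"
    and n: "0 < n" and x: "0 \<le> x" "exp (- x) \<le> 1 / real n ^ 5"
  shows "1 - 1 / (real n)\<^sup>2 \<le> measure (PiM {..<n} (\<lambda>_. M))
      {Z \<in> space (PiM {..<n} (\<lambda>_. M)). \<forall>C\<in>\<C>.
        \<bar>(\<Sum>i<n. indicator C (f (Z i))) / real n - measure (distr M X f) C\<bar>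
          \<le> sqrt (2 * c * x / n) + 2 * x / (3 * real n) + 4 / n}"
proof -
  let ?M = "PiM {..<n} (\<lambda>_. M)"
  interpret product: prob_space ?M
    by (intro prob_space_PiM) (simp add: prob_space_axioms)
  define B where "B = sqrt (2 * c * x / n) + 2 * x / (3 * real n) + 4 / n"
  define E where "E C = f -` C \<inter> space M" for C
  define bad where "bad C = {Z \<in> space ?M. B < \<bar>(\<Sum>i<n. indicator (E C) (Z i)) / n - prob (E C)\<bar>}"
    for C
  have E_events [measurable]: "E C \<in> events" if "C \<in> \<C>" for C
    using that family(2) unfolding E_def by (blast intro: measurable_sets[OF f])
  have prob_E: "prob (E C) = measure (distr M X f) C" if "C \<in> \<C>" for C
    using that family unfolding E_def by (subst measure_distr) auto
  have bad_sets: "bad C \<in> product.events" if "C \<in> \<C>" for C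
    using that unfolding bad_def by measurable
  have good: "{Z \<in> space ?M. \<forall>C\<in>\<C>.
        \<bar>(\<Sum>i<n. indicator C (f (Z i))) / real n - measure (distr M X f) C\<bar> \<le> B}
      = space ?M - (\<Union>C\<in>\<C>. bad C)"
  proof -
    have "indicator C (f (Z i)) = (indicator (E C) (Z i) :: real)"
      if "Z \<in> space ?M" "i < n" for Z C i
      using that by (auto simp: E_def space_PiM PiE_iff split: split_indicator)
    then show ?thesis
      by (auto simp: bad_def prob_E not_less)
  qed
  have "measure ?M (\<Union>C\<in>\<C>. bad C) \<le> (\<Sum>C\<in>\<C>. measure ?M (bad C))"
    using family bad_sets by (intro product.finite_measure_subadditive_finite) auto
  also have "\<dots> \<le> (\<Sum>C\<in>\<C>. 4 * measure (distr M X f) C / real n ^ 3)"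
    unfolding bad_def B_def
    using prob_empirical_deviation_le[OF E_events n _ c(2) x] c(1) prob_E
    by (intro sum_mono) auto
  also have "\<dots> \<le> 4 * K / real n ^ 3"
    using K(1) by (simp add: sum_divide_distrib[symmetric] sum_distrib_left[symmetric] divide_right_mono)
  also have "\<dots> \<le> real n / real n ^ 3"
    using K(2) by (simp add: divide_right_mono)
  also have "\<dots> = 1 / (real n)\<^sup>2"
    using n by (simp add: power2_eq_square power3_eq_cube)
  finally have "measure ?M (\<Union>C\<in>\<C>. bad C) \<le> 1 / (real n)\<^sup>2" .
  moreover have "(\<Union>C\<in>\<C>. bad C) \<in> product.events"
    using family bad_sets by auto
  ultimately have "1 - 1 / (real n)\<^sup>2 \<le> measure ?M (space ?M - (\<Union>C\<in>\<C>. bad C))"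
    by (simp add: product.prob_compl)
  then show ?thesis
    using good by (simp add: B_def)
qed

definition balanced_levels :: "nat set \<Rightarrow> nat \<Rightarrow> (nat \<Rightarrow> nat) \<Rightarrow> bool" where
  "balanced_levels R p k \<longleftrightarrow> (\<Sum>i\<in>R. k i) = p \<and> (\<forall>i\<in>R. \<forall>i'\<in>R. k i \<le> k i' + 1)"

definition dyadic_edges ::
  "nat set \<Rightarrow> (nat \<Rightarrow> nat) \<Rightarrow> (nat \<Rightarrow> nat) \<Rightarrow> (nat \<Rightarrow> real) \<Rightarrow> (nat \<Rightarrow> real) \<Rightarrow> bool" where
  "dyadic_edges R k j a b \<longleftrightarrow>
     (\<forall>i\<in>R. j i < 2 ^ k i \<and> a i = real (j i) / 2 ^ k i \<and> b i = (real (j i) + 1) / 2 ^ k i)"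

lemma balanced_levels_refine:
  assumes "balanced_levels R p k" "finite R" "i0 \<in> R" "\<And>i. i \<in> R \<Longrightarrow> k i0 \<le> k i"
  shows "balanced_levels R (Suc p) (k(i0 := Suc (k i0)))"
proof -
  have "(\<Sum>i\<in>R. (k(i0 := Suc (k i0))) i) = Suc (k i0) + (\<Sum>i\<in>R - {i0}. k i)"
    using assms(2,3) by (simp add: sum.remove)
  also have "\<dots> = Suc (\<Sum>i\<in>R. k i)"
    using assms(2,3) by (simp add: sum.remove)
  finally show ?thesis
    using assms by (fastforce simp: balanced_levels_def)
qed

lemma balanced_levels_values:
  assumes "balanced_levels R p k" "finite R" "i \<in> R"
  shows "k i \<in> {p div card R, Suc (p div card R)}"
proof -
  define m where "m = Min (k ` R)"
  have "m \<in> k ` R"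
    unfolding m_def using assms(2,3) by (intro Min_in) auto
  then obtain i0 where i0: "i0 \<in> R" "k i0 = m"
    by auto
  have ge: "m \<le> k i" if "i \<in> R" for i
    using that assms(2) by (simp add: m_def)
  have le: "k i \<le> Suc m" if "i \<in> R" for i
    using that assms(1) i0 unfolding balanced_levels_def by (metis Suc_eq_plus1)
  have "card R * m \<le> p"
    using sum_mono[of R "\<lambda>_. m" k] ge assms(1) by (simp add: balanced_levels_def)
  moreover have "p < card R * Suc m"
  proof -
    have "(\<Sum>i\<in>R. k i) < (\<Sum>i\<in>R. Suc m)"
      using assms(2) le i0 by (intro sum_strict_mono_ex1) auto
    then show ?thesis
      using assms(1) by (simp add: balanced_levels_def)
  qed
  ultimately have "p div card R = m"
    by (intro div_nat_eqI)
  then show ?thesis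
    using ge le assms(3) by fastforce
qed

lemma dyadic_edges_longest_min_level:
  assumes "dyadic_edges R k j a b" "finite R" "i0 \<in> R" "i \<in> R"
    and "b i0 - a i0 = Max ((\<lambda>i. b i - a i) ` R)"
  shows "k i0 \<le> k i"
proof (rule ccontr)
  assume "\<not> k i0 \<le> k i"
  then have "1 / (2::real) ^ k i0 < 1 / 2 ^ k i"
    by (intro divide_strict_left_mono power_strict_increasing) auto
  moreover have "b i - a i \<le> b i0 - a i0"
    using assms(2,4,5) by simp
  ultimately show False
    using assms(1,3,4) by (simp add: dyadic_edges_def add_divide_distrib)
qed

lemma dyadic_edges_halves:
  assumes "dyadic_edges R k j a b" "i0 \<in> R"
  shows "dyadic_edges R (k(i0 := Suc (k i0))) (j(i0 := 2 * j i0)) a (b(i0 := (a i0 + b i0) / 2))"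
    and "dyadic_edges R (k(i0 := Suc (k i0))) (j(i0 := 2 * j i0 + 1)) (a(i0 := (a i0 + b i0) / 2)) b"
  using assms by (auto simp: dyadic_edges_def field_simps)

lemma maxedge_cell_dyadic:
  assumes "maxedge_cell d s p a b"
  shows "\<exists>k j. balanced_levels {s..<d} p k \<and> dyadic_edges {s..<d} k j a b"
  using assms
proof induction
  case root
  show ?case
    by (intro exI[of _ "\<lambda>_. 0"]) (simp add: balanced_levels_def dyadic_edges_def)
next
  case (left p a b i0)
  then obtain k j where k: "balanced_levels {s..<d} p k" and j: "dyadic_edges {s..<d} k j a b"
    by blast
  have "k i0 \<le> k i" if "i \<in> {s..<d}" for i
    using dyadic_edges_longest_min_level[OF j _ left.hyps(2) that left.hyps(3)] by simp
  then show ?case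
    using balanced_levels_refine[OF k _ left.hyps(2)] dyadic_edges_halves(1)[OF j left.hyps(2)]
    by blast
next
  case (right p a b i0)
  then obtain k j where k: "balanced_levels {s..<d} p k" and j: "dyadic_edges {s..<d} k j a b"
    by blast
  have "k i0 \<le> k i" if "i \<in> {s..<d}" for i
    using dyadic_edges_longest_min_level[OF j _ right.hyps(2) that right.hyps(3)] by simp
  then show ?case
    using balanced_levels_refine[OF k _ right.hyps(2)] dyadic_edges_halves(2)[OF j right.hyps(2)]
    by blast
qed

definition grid_box :: "nat \<Rightarrow> (nat \<Rightarrow> nat) \<Rightarrow> (nat \<Rightarrow> nat) \<Rightarrow> (nat \<Rightarrow> real) set" where
  "grid_box d w j = PiE {..<d} (\<lambda>i. {real (j i) / w i ..< (real (j i) + 1) / w i})"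

lemma grid_box_sets: "grid_box d w j \<in> sets (Xspace d)"
  unfolding grid_box_def by (intro sets_PiM_I_finite) auto

lemma emeasure_grid_box:
  assumes "\<And>i. i < d \<Longrightarrow> 0 < w i"
  shows "emeasure (Xspace d) (grid_box d w j) = ennreal (\<Prod>i<d. 1 / real (w i))"
proof -
  interpret product_sigma_finite "\<lambda>_::nat. lborel :: real measure"
    by (simp add: product_sigma_finite_def sigma_finite_lborel)
  have "emeasure (Xspace d) (grid_box d w j)
      = (\<Prod>i<d. emeasure lborel {real (j i) / w i ..< (real (j i) + 1) / w i})"
    unfolding grid_box_def by (intro emeasure_PiM) auto
  also have "\<dots> = (\<Prod>i<d. ennreal (1 / real (w i)))"
  proof (intro prod.cong refl)
    fix i assume "i \<in> {..<d}"
    then have "0 < w i" using assms by simp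
    then show "emeasure lborel {real (j i) / w i ..< (real (j i) + 1) / w i} = 1 / real (w i)"
      by (simp add: divide_right_mono add_divide_distrib)
  qed
  finally show ?thesis
    by (simp add: prod_ennreal)
qed

lemma grid_box_eq:
  "grid_box d w j = {x \<in> space (Xspace d). \<forall>i<d. x i \<in> {real (j i) / w i ..< (real (j i) + 1) / w i}}"
  unfolding grid_box_def space_PiM by (simp add: set_eq_iff PiE_iff del: atLeastLessThan_iff) blast

lemma floor_mult_eq_grid_index:
  fixes w j :: nat
  assumes "0 < w" "y \<in> {real j / w ..< (real j + 1) / w}"
  shows "\<lfloor>y * w\<rfloor> = int j"
  using assms by (intro floor_unique) (auto simp: field_simps)

lemma disjoint_family_on_grid_box:
  assumes "\<And>i. i < d \<Longrightarrow> 0 < w i"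
  shows "disjoint_family_on (grid_box d w) (extensional {..<d})"
  unfolding disjoint_family_on_def
proof (intro ballI impI)
  fix j j' :: "nat \<Rightarrow> nat"
  assume j: "j \<in> extensional {..<d}" "j' \<in> extensional {..<d}" and "j \<noteq> j'"
  show "grid_box d w j \<inter> grid_box d w j' = {}"
  proof (rule ccontr)
    assume "grid_box d w j \<inter> grid_box d w j' \<noteq> {}"
    then obtain y where y: "y \<in> grid_box d w j" "y \<in> grid_box d w j'"
      by blast
    have "int (j i) = int (j' i)" if "i < d" for i
    proof -
      have "y i \<in> {real (j i) / w i ..< (real (j i) + 1) / w i}"
        and "y i \<in> {real (j' i) / w i ..< (real (j' i) + 1) / w i}"
        using y that unfolding grid_box_def by (blast dest: PiE_mem)+
      then show ?thesis
        using floor_mult_eq_grid_index[OF assms[OF that]] by metis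
    qed
    then have "j = j'"
      using j by (auto intro: extensionalityI)
    with \<open>j \<noteq> j'\<close> show False ..
  qed
qed

definition cell_width :: "nat \<Rightarrow> nat \<Rightarrow> (nat \<Rightarrow> nat) \<Rightarrow> nat \<Rightarrow> nat" where
  "cell_width s t k i = (if i < s then t else 2 ^ k i)"

lemma cell_grid_box:
  assumes "C \<in> cells d s t p" "s < d"
  obtains k j where "k \<in> PiE {s..<d} (\<lambda>_. {p div (d - s), Suc (p div (d - s))})"
    and "(\<Sum>i\<in>{s..<d}. k i) = p"
    and "j \<in> PiE {..<d} (\<lambda>i. {..<cell_width s t k i})"
    and "C = grid_box d (cell_width s t k) j"
proof -
  from assms(1) obtain m a b where m: "\<forall>i<s. m i < t" and cell: "maxedge_cell d s p a b"
    and C: "C = {x \<in> space (Xspace d).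
         (\<forall>i<s. real (m i) / real t \<le> x i \<and> x i < (real (m i) + 1) / real t) \<and>
         (\<forall>i\<in>{s..<d}. a i \<le> x i \<and> x i < b i)}"
    unfolding cells_def by blast
  obtain k0 j0 where k0: "balanced_levels {s..<d} p k0" and j0: "dyadic_edges {s..<d} k0 j0 a b"
    using maxedge_cell_dyadic[OF cell] by blast
  define k where "k = restrict k0 {s..<d}"
  define j where "j = restrict (\<lambda>i. if i < s then m i else j0 i) {..<d}"
  have "k \<in> PiE {s..<d} (\<lambda>_. {p div (d - s), Suc (p div (d - s))})"
    using balanced_levels_values[OF k0] by (auto simp: k_def)
  moreover have "(\<Sum>i\<in>{s..<d}. k i) = p"
    using k0 by (simp add: k_def balanced_levels_def)
  moreover have "j \<in> PiE {..<d} (\<lambda>i. {..<cell_width s t k i})"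
    using m j0 by (auto simp: j_def k_def cell_width_def dyadic_edges_def)
  moreover have "C = grid_box d (cell_width s t k) j"
  proof -
    let ?in_grid = "\<lambda>i y. y \<in> {real (j i) / cell_width s t k i ..< (real (j i) + 1) / cell_width s t k i}"
    let ?in_hist = "\<lambda>i y. real (m i) / real t \<le> y \<and> y < (real (m i) + 1) / real t"
    let ?in_pub = "\<lambda>i y. a i \<le> y \<and> y < b i"
    have grid: "?in_grid i y \<longleftrightarrow> (if i < s then ?in_hist i y else ?in_pub i y)" if "i < d" for i y
      using that j0 by (auto simp: j_def k_def cell_width_def dyadic_edges_def)
    have "(\<forall>i<d. ?in_grid i (x i)) \<longleftrightarrow> (\<forall>i<s. ?in_hist i (x i)) \<and> (\<forall>i\<in>{s..<d}. ?in_pub i (x i))"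
      for x
    proof
      assume "\<forall>i<d. ?in_grid i (x i)"
      then show "(\<forall>i<s. ?in_hist i (x i)) \<and> (\<forall>i\<in>{s..<d}. ?in_pub i (x i))"
        using grid assms(2) by (metis atLeastLessThan_iff less_trans not_le)
    next
      assume "(\<forall>i<s. ?in_hist i (x i)) \<and> (\<forall>i\<in>{s..<d}. ?in_pub i (x i))"
      then show "\<forall>i<d. ?in_grid i (x i)"
        using grid by (metis atLeastLessThan_iff not_le)
    qed
    then show ?thesis
      unfolding C grid_box_eq by blast
  qed
  ultimately show ?thesis
    using that by blast
qed

lemma cells_sets:
  assumes "C \<in> cells d s t p" "s < d"
  shows "C \<in> sets (Xspace d)"
proof -
  obtain k j where "C = grid_box d (cell_width s t k) j"
    by (rule cell_grid_box[OF assms])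
  then show ?thesis
    by (simp add: grid_box_sets)
qed

lemma emeasure_cell:
  assumes "C \<in> cells d s t p" "s < d" "1 \<le> t"
  shows "emeasure (Xspace d) C = ennreal ((1 / real t) ^ s * (1 / 2) ^ p)"
proof -
  obtain k j where k: "(\<Sum>i\<in>{s..<d}. k i) = p" and C: "C = grid_box d (cell_width s t k) j"
    by (rule cell_grid_box[OF assms(1,2)])
  have "(\<Prod>i<d. 1 / real (cell_width s t k i))
      = (\<Prod>i<s. 1 / real (cell_width s t k i)) * (\<Prod>i\<in>{s..<d}. 1 / real (cell_width s t k i))"
    using assms(2) by (simp add: lessThan_atLeast0 prod.atLeastLessThan_concat)
  also have "\<dots> = (\<Prod>i<s. 1 / real t) * (\<Prod>i\<in>{s..<d}. (1 / 2) ^ k i)"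
    by (simp add: cell_width_def power_one_over)
  also have "\<dots> = (1 / real t) ^ s * (1 / 2) ^ p"
    by (simp add: k[symmetric] power_sum)
  finally show ?thesis
    using assms(3) by (simp add: C emeasure_grid_box cell_width_def)
qed

lemma sum_measure_cells_le:
  assumes "prob_space Q" "sets Q = sets (Xspace d)" "s < d" "1 \<le> t"
  shows "finite (cells d s t p)" "(\<Sum>C\<in>cells d s t p. measure Q C) \<le> 2 ^ d"
proof -
  interpret Q: prob_space Q by fact
  define levels where "levels = PiE {s..<d} (\<lambda>_. {p div (d - s), Suc (p div (d - s))})"
  define indices where "indices k = PiE {..<d} (\<lambda>i. {..<cell_width s t k i})" for k
  define box where "box = (\<lambda>(k, j). grid_box d (cell_width s t k) j)"
  have finite_levels: "finite levels" and finite_indices_at: "finite (indices k)" for k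
    by (auto simp: levels_def indices_def intro!: finite_PiE)
  have finite_indices: "finite (Sigma levels indices)"
    by (rule finite_SigmaI[OF finite_levels finite_indices_at])
  have cells: "cells d s t p \<subseteq> box ` Sigma levels indices"
  proof
    fix C assume "C \<in> cells d s t p"
    then obtain k j where "k \<in> levels" "j \<in> indices k" "C = box (k, j)"
      unfolding levels_def indices_def box_def by (rule cell_grid_box[OF _ assms(3)]) simp
    then show "C \<in> box ` Sigma levels indices"
      by blast
  qed
  then show "finite (cells d s t p)"
    by (rule finite_surj[OF finite_indices])
  have "(\<Sum>C\<in>cells d s t p. measure Q C) \<le> (\<Sum>C\<in>box ` Sigma levels indices. measure Q C)"
    using cells finite_indices by (intro sum_mono2 finite_imageI) simp_all
  also have "\<dots> \<le> (\<Sum>kj\<in>Sigma levels indices. measure Q (box kj))"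
    using sum_image_le[OF finite_indices, of "measure Q" box] by (simp add: o_def)
  also have "\<dots> = (\<Sum>(k, j)\<in>Sigma levels indices. measure Q (grid_box d (cell_width s t k) j))"
    by (intro sum.cong refl) (simp add: box_def split_beta)
  also have "\<dots> = (\<Sum>k\<in>levels. \<Sum>j\<in>indices k. measure Q (grid_box d (cell_width s t k) j))"
    using finite_indices_at by (intro sum.Sigma[symmetric] finite_levels) auto
  also have "\<dots> = (\<Sum>k\<in>levels. measure Q (\<Union>j\<in>indices k. grid_box d (cell_width s t k) j))"
  proof (intro sum.cong refl Q.finite_measure_finite_Union[symmetric])
    fix k
    show "finite (indices k)"
      by (fact finite_indices_at)
    have "indices k \<subseteq> extensional {..<d}"
      by (simp add: indices_def PiE_def)
    moreover have "disjoint_family_on (grid_box d (cell_width s t k)) (extensional {..<d})"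
      using assms(4) by (intro disjoint_family_on_grid_box) (simp add: cell_width_def)
    ultimately show "disjoint_family_on (grid_box d (cell_width s t k)) (indices k)"
      by (rule disjoint_family_on_mono)
    show "grid_box d (cell_width s t k) ` indices k \<subseteq> Q.events"
      by (auto simp: assms(2) grid_box_sets)
  qed
  also have "\<dots> \<le> (\<Sum>k\<in>levels. 1)"
    by (intro sum_mono) simp
  also have "\<dots> = 2 ^ (d - s)"
    by (simp add: levels_def card_PiE)
  also have "\<dots> \<le> (2 ^ d :: real)"
    by (intro power_increasing) auto
  finally show "(\<Sum>C\<in>cells d s t p. measure Q C) \<le> 2 ^ d" .
qed

lemma measure_density_le:
  assumes "g \<in> borel_measurable M" "\<And>x. x \<in> space M \<Longrightarrow> g x \<le> c" "0 \<le> c"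
    and "A \<in> sets M" "emeasure M A < \<infinity>"
  shows "measure (density M (\<lambda>x. ennreal (g x))) A \<le> c * measure M A"
proof -
  have "emeasure (density M (\<lambda>x. ennreal (g x))) A = (\<integral>\<^sup>+ x. ennreal (g x) * indicator A x \<partial>M)"
    using assms(1,4) by (intro emeasure_density) auto
  also have "\<dots> \<le> (\<integral>\<^sup>+ x. ennreal c * indicator A x \<partial>M)"
    using assms(2) by (intro nn_integral_mono) (simp add: ennreal_leI split: split_indicator)
  also have "\<dots> = ennreal (c * measure M A)"
    using assms(3-5) by (simp add: nn_integral_cmult_indicator emeasure_eq_ennreal_measure ennreal_mult)
  finally show ?thesis
    using assms(3) by (simp add: measure_def enn2real_leI)
qed

lemma assumption_A_fst_measurable:
  assumes "assumption_A d P M c_lo c_hi"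
  shows "fst \<in> P \<rightarrow>\<^sub>M Xspace d"
  using assms measurable_fst measurable_cong_sets
  unfolding assumption_A_def by blast

lemma assumption_A_cell_measure_le:
  assumes "assumption_A d P M c_lo c_hi" "C \<in> cells d s t p" "s < d" "1 \<le> t"
  shows "measure (distr P (Xspace d) fst) C \<le> c_hi * (1 / real t ^ s) * 2 powr (- real p)"
proof -
  from assms(1) obtain g where g: "g \<in> borel_measurable (Xspace d)"
    and marginal: "distr P (Xspace d) fst = density (Xspace d) (\<lambda>x. ennreal (g x))"
    and outside: "\<forall>x. x \<notin> unit_cube d \<longrightarrow> g x = 0"
    and inside: "\<forall>x\<in>unit_cube d. c_lo \<le> g x \<and> g x \<le> c_hi"
    and c: "0 < c_lo" "c_lo \<le> c_hi"
    unfolding assumption_A_def by blast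
  have "g x \<le> c_hi" for x
    using inside outside c by (cases "x \<in> unit_cube d") auto
  then have "measure (distr P (Xspace d) fst) C \<le> c_hi * measure (Xspace d) C"
    unfolding marginal using c emeasure_cell[OF assms(2-4)]
    by (intro measure_density_le g cells_sets[OF assms(2,3)]) auto
  also have "\<dots> = c_hi * ((1 / real t) ^ s * (1 / 2) ^ p)"
    using emeasure_cell[OF assms(2-4)] by (simp add: measure_def)
  also have "\<dots> = c_hi * (1 / real t ^ s) * 2 powr (- real p)"
    by (simp add: power_one_over powr_minus_divide powr_realpow)
  finally show ?thesis .
qed

lemma exp_minus_mult_ln_le:
  assumes "1 \<le> y" "real k \<le> a"
  shows "exp (- (a * ln y)) \<le> 1 / y ^ k"
proof -
  have "exp (- (a * ln y)) \<le> exp (- (real k * ln y))"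
    using assms by (simp add: mult_right_mono)
  also have "\<dots> = 1 / y ^ k"
    using assms(1) by (simp add: exp_minus exp_of_nat_mult inverse_eq_divide)
  finally show ?thesis .
qed

lemma empirical_cell_frequencies_concentrate:
  assumes n: "2 ^ (d + 2) \<le> n" and A: "assumption_A d P M c_lo c_hi" and s: "s < d" and t: "1 \<le> t"
  shows "1 - 1 / (real n)\<^sup>2 \<le> measure (PiM {..<n} (\<lambda>_. P))
      {Z \<in> space (PiM {..<n} (\<lambda>_. P)). \<forall>C\<in>cells d s t p.
        \<bar>(\<Sum>i<n. indicator C (fst (Z i))) / real n - measure (distr P (Xspace d) fst) C\<bar>
        \<le> sqrt (c_hi * (1 / real t ^ s) * 2 powr (1 - real p) * (4 * real d + 5) * ln (real n)
                 / real n)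
          + 2 * (4 * real d + 5) * ln (real n) / (3 * real n) + 4 / real n}"
proof -
  interpret prob_space P
    using A by (simp add: assumption_A_def)
  let ?Q = "distr P (Xspace d) fst"
  have fst: "fst \<in> P \<rightarrow>\<^sub>M Xspace d"
    by (rule assumption_A_fst_measurable[OF A])
  then have Q: "prob_space ?Q" "sets ?Q = sets (Xspace d)"
    by (simp_all add: prob_space_distr)
  define v where "v = c_hi * (1 / real t ^ s) * 2 powr (- real p)"
  define x where "x = (4 * real d + 5) * ln (real n)"
  have "4 * 2 ^ d \<le> n"
    using n by (simp add: power_add mult.commute)
  then have n_large: "4 * 2 ^ d \<le> real n" and "0 < n"
    by (simp_all add: order.strict_trans2[OF _ \<open>4 * 2 ^ d \<le> n\<close>])
      (metis of_nat_le_iff of_nat_mult of_nat_numeral of_nat_power)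
  have "0 < c_lo" "c_lo \<le> c_hi"
    using A by (simp_all add: assumption_A_def)
  then have "0 < v"
    using t by (simp add: v_def)
  have "0 \<le> x" "exp (- x) \<le> 1 / real n ^ 5"
    using \<open>0 < n\<close> by (simp_all add: x_def exp_minus_mult_ln_le)
  have "c_hi * (1 / real t ^ s) * 2 powr (1 - real p) * (4 * real d + 5) * ln (real n) / real n
      = 2 * v * x / n"
    by (simp add: v_def x_def powr_diff powr_minus_divide)
  then have bound: "sqrt (c_hi * (1 / real t ^ s) * 2 powr (1 - real p) * (4 * real d + 5) * ln (real n)
                 / real n)
          + 2 * (4 * real d + 5) * ln (real n) / (3 * real n) + 4 / real n
      = sqrt (2 * v * x / n) + 2 * x / (3 * real n) + 4 / n"
    by (simp add: x_def)
  have "1 - 1 / (real n)\<^sup>2 \<le> measure (PiM {..<n} (\<lambda>_. P))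
      {Z \<in> space (PiM {..<n} (\<lambda>_. P)). \<forall>C\<in>cells d s t p.
        \<bar>(\<Sum>i<n. indicator C (fst (Z i))) / real n - measure ?Q C\<bar>
        \<le> sqrt (2 * v * x / n) + 2 * x / (3 * real n) + 4 / n}"
  proof (rule prob_uniform_empirical_deviation[OF fst])
    show "finite (cells d s t p)"
      by (rule sum_measure_cells_le(1)[OF Q s t])
    show "cells d s t p \<subseteq> sets (Xspace d)"
      using cells_sets[OF _ s] by blast
    show "measure ?Q C \<le> v" if "C \<in> cells d s t p" for C
      using assumption_A_cell_measure_le[OF A that s t] by (simp add: v_def)
    show "(\<Sum>C\<in>cells d s t p. measure ?Q C) \<le> 2 ^ d"
      by (rule sum_measure_cells_le(2)[OF Q s t])
  qed fact+
  then show ?thesis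
    unfolding bound .
qed

theorem lemma4:
  fixes d :: nat
  assumes "d \<ge> 1"
  shows "\<exists>N::nat. \<forall>n\<ge>N. \<forall>P M c_lo c_hi s t p.
     assumption_A d P M c_lo c_hi \<longrightarrow> s < d \<longrightarrow> t \<ge> 1 \<longrightarrow>
     measure (PiM {..<n} (\<lambda>_. P))
       {Z \<in> space (PiM {..<n} (\<lambda>_. P)). \<forall>C\<in>cells d s t p.
          \<bar>(\<Sum>i<n. indicator C (fst (Z i))) / real n - measure (distr P (Xspace d) fst) C\<bar>
          \<le> sqrt (c_hi * (1 / real t ^ s) * 2 powr (1 - real p) * (4 * real d + 5) * ln (real n)
                   / real n)
            + 2 * (4 * real d + 5) * ln (real n) / (3 * real n) + 4 / real n}
     \<ge> 1 - 1 / (real n)\<^sup>2"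
  using empirical_cell_frequencies_concentrate by blast

end
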